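(* Let $m,n\ge 3$ be (not necessarily distinct) integers. Then the strong product $C_m\boxtimes C_n$ is $\mathbb{Z}_{mn}$-distance antimagic if and only if both $m$ and $n$ are odd.
   Context: $C_n$ is the cycle of length $n$. The strong product $G_1\boxtimes G_2$ has vertex set $V(G_1)\times V(G_2)$, with distinct $(x_1,x_2),(y_1,y_2)$ adjacent iff for each $i$ either $x_i=y_i$ or $x_iy_i\in E(G_i)$. For a graph $G$ with $N$ vertices, a $\mathbb{Z}_N$-distance antimagic labelling is a bijection $f:V(G)\to\mathbb{Z}_N$ such that the weights $w_f(x)=\sum_{y\in N(x)} f(y)$ (mod $N$, $N(x)$ the open neighbourhood) are pairwise distinct; $G$ is $\mathbb{Z}_N$-distance antimagic if such a labelling exists. *)

theory Defs
  imports Main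
begin

definition cycle_adj :: "nat \<Rightarrow> nat \<Rightarrow> nat \<Rightarrow> bool" where
  "cycle_adj n i j \<longleftrightarrow> i < n \<and> j < n \<and> (j = (i + 1) mod n \<or> i = (j + 1) mod n)"

definition strong_adj ::
  "('a \<Rightarrow> 'a \<Rightarrow> bool) \<Rightarrow> ('b \<Rightarrow> 'b \<Rightarrow> bool) \<Rightarrow> 'a \<times> 'b \<Rightarrow> 'a \<times> 'b \<Rightarrow> bool" where
  "strong_adj E1 E2 x y \<longleftrightarrow> x \<noteq> y \<and>
     (fst x = fst y \<or> E1 (fst x) (fst y)) \<and> (snd x = snd y \<or> E2 (snd x) (snd y))"

definition nbhd :: "'v set \<Rightarrow> ('v \<Rightarrow> 'v \<Rightarrow> bool) \<Rightarrow> 'v \<Rightarrow> 'v set" where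
  "nbhd V E x = {y \<in> V. E x y}"

text \<open>Z_N-distance antimagic labelling, N = |V|: a bijection onto Z_N (represented
by {0..<N}) whose neighbourhood sums mod N are pairwise distinct.\<close>
definition ZN_distance_antimagic_labelling :: "'v set \<Rightarrow> ('v \<Rightarrow> 'v \<Rightarrow> bool) \<Rightarrow> ('v \<Rightarrow> nat) \<Rightarrow> bool" where
  "ZN_distance_antimagic_labelling V E f \<longleftrightarrow>
     bij_betw f V {0..<card V} \<and>
     inj_on (\<lambda>x. (\<Sum>y\<in>nbhd V E x. f y) mod card V) V"

definition ZN_distance_antimagic :: "'v set \<Rightarrow> ('v \<Rightarrow> 'v \<Rightarrow> bool) \<Rightarrow> bool" where
  "ZN_distance_antimagic V E \<longleftrightarrow> (\<exists>f. ZN_distance_antimagic_labelling V E f)"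

end

theory Submission
  imports Defs "HOL-Number_Theory.Cong"
begin

text \<open>The weights of a \<open>\<int>\<^sub>N\<close>-distance antimagic labelling run through \<open>\<int>\<^sub>N\<close>, just as
the labels do. In an \<open>r\<close>-regular graph every label is counted \<open>r\<close> times in the total
weight, so \<open>T \<equiv> r T (mod N)\<close> for \<open>T = N(N - 1)/2\<close>; if \<open>r\<close> and \<open>N\<close> are both even this
fails, because then \<open>T \<equiv> N/2\<close> while \<open>r T \<equiv> 0\<close>. Since \<open>C\<^sub>m \<boxtimes> C\<^sub>n\<close> is 8-regular, \<open>mn\<close> must be odd.

Conversely, for odd \<open>m, n\<close> the row-major labelling \<open>(i, j) \<mapsto> ni + j\<close> works. The closed
neighbourhood of \<open>i\<close> in \<open>C\<^sub>k\<close> has label sum \<open>3i + k \<epsilon>\<^sub>k(i)\<close>, with a correction \<open>\<epsilon>\<^sub>k(i) \<in> {1, 0, -1}\<close>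
caused by the wrap-around, so the weight of \<open>(i, j)\<close> is \<open>8(ni + j) + 3n(m \<epsilon>\<^sub>m(i) + \<epsilon>\<^sub>n(j))\<close>.
Modulo \<open>n\<close> this is \<open>8j\<close>, and for fixed \<open>j\<close> it is \<open>8ni\<close> plus a constant modulo \<open>mn\<close>; as 8 is
invertible modulo the odd numbers \<open>m\<close> and \<open>n\<close>, the weights are distinct.\<close>

definition closed_nbhd :: "'v set \<Rightarrow> ('v \<Rightarrow> 'v \<Rightarrow> bool) \<Rightarrow> 'v \<Rightarrow> 'v set" where
  "closed_nbhd V E x = insert x (nbhd V E x)"

lemma nbhd_strong_adj:
  assumes "x \<in> A" "y \<in> B"
  shows "nbhd (A \<times> B) (strong_adj E1 E2) (x, y) = closed_nbhd A E1 x \<times> closed_nbhd B E2 y - {(x, y)}"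
  using assms unfolding nbhd_def closed_nbhd_def strong_adj_def by auto

lemma strong_adj_commute:
  assumes "\<And>x y. E1 x y = E1 y x" "\<And>x y. E2 x y = E2 y x"
  shows "strong_adj E1 E2 x y = strong_adj E1 E2 y x"
  using assms unfolding strong_adj_def by auto

lemma sum_sum_nbhd_regular:
  assumes "finite V" "\<And>x y. E x y = E y x" "\<And>x. x \<in> V \<Longrightarrow> card (nbhd V E x) = r"
  shows "(\<Sum>x\<in>V. \<Sum>y\<in>nbhd V E x. f y) = r * sum f V"
proof -
  have "(\<Sum>x\<in>V. \<Sum>y\<in>nbhd V E x. f y) = (\<Sum>x\<in>V. \<Sum>y\<in>V. if E x y then f y else 0)"
    unfolding nbhd_def using assms(1) by (simp add: sum.inter_filter)
  also have "\<dots> = (\<Sum>y\<in>V. \<Sum>x\<in>V. if E y x then f y else 0)"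
    by (subst sum.swap) (simp add: assms(2))
  also have "\<dots> = (\<Sum>y\<in>V. \<Sum>x\<in>nbhd V E y. f y)"
    unfolding nbhd_def using assms(1) by (intro sum.cong refl sum.inter_filter[symmetric])
  also have "\<dots> = r * sum f V"
    using assms(3) by (simp add: sum_distrib_left mult.commute)
  finally show ?thesis .
qed

lemma bij_betw_weight_mod_card:
  assumes "ZN_distance_antimagic_labelling V E f" "finite V" "V \<noteq> {}"
  shows "bij_betw (\<lambda>x. (\<Sum>y\<in>nbhd V E x. f y) mod card V) V {0..<card V}"
proof -
  let ?w = "\<lambda>x. (\<Sum>y\<in>nbhd V E x. f y) mod card V"
  have "0 < card V"
    using assms(2,3) by (simp add: card_gt_0_iff)
  have "inj_on ?w V"
    using assms(1) unfolding ZN_distance_antimagic_labelling_def by blast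
  moreover have "?w ` V \<subseteq> {0..<card V}"
    using \<open>0 < card V\<close> by auto
  ultimately show ?thesis
    by (simp add: bij_betw_def card_image card_subset_eq)
qed

lemma ZN_distance_antimagic_even_regular_imp_odd_card:
  assumes "ZN_distance_antimagic V E" "finite V" "V \<noteq> {}"
    and "\<And>x y. E x y = E y x" "\<And>x. x \<in> V \<Longrightarrow> card (nbhd V E x) = r" "even r"
  shows "odd (card V)"
proof -
  define N where "N = card V"
  define T where "T = \<Sum>{0..<N}"
  have "0 < N"
    using assms(2,3) unfolding N_def by (simp add: card_gt_0_iff)
  obtain f where f: "ZN_distance_antimagic_labelling V E f"
    using assms(1) unfolding ZN_distance_antimagic_def by blast
  have labels: "sum f V = T"
    using f sum.reindex_bij_betw[of f V "{0..<N}" id]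
    unfolding ZN_distance_antimagic_labelling_def T_def N_def by simp
  have "T = (\<Sum>x\<in>V. (\<Sum>y\<in>nbhd V E x. f y) mod N)"
    using sum.reindex_bij_betw[OF bij_betw_weight_mod_card[OF f assms(2,3)], of id]
    unfolding T_def N_def by simp
  then have "[T = r * T] (mod N)"
    using sum_sum_nbhd_regular[OF assms(2,4,5), of f] labels
    by (simp add: cong_def mod_sum_eq)
  then have "int N dvd (int r - 1) * int T"
    by (simp add: cong_iff_dvd_diff dvd_diff_commute algebra_simps flip: cong_int_iff)
  then obtain c where c: "(int r - 1) * int T = int N * c"
    by (elim dvdE)
  have gauss: "2 * int T = int N * (int N - 1)"
    unfolding T_def by (induct N) (simp_all add: algebra_simps)
  have "int N * ((int r - 1) * (int N - 1)) = (int r - 1) * (2 * int T)"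
    unfolding gauss by (simp only: ac_simps)
  also have "\<dots> = int N * (2 * c)"
    by (metis c mult.left_commute)
  finally have "(int r - 1) * (int N - 1) = 2 * c"
    using \<open>0 < N\<close> by simp
  then have "even ((int r - 1) * (int N - 1))"
    by simp
  then show ?thesis
    using assms(6) by (simp add: N_def)
qed

lemma cycle_adj_commute: "cycle_adj k i j = cycle_adj k j i"
  unfolding cycle_adj_def by auto

lemma closed_nbhd_cycle:
  assumes "i < k"
  shows "closed_nbhd {0..<k} (cycle_adj k) i = {(i + k - 1) mod k, i, (i + 1) mod k}"
proof -
  have "i = (j + 1) mod k \<longleftrightarrow> j = (i + k - 1) mod k" if "j < k" for j
    using assms that by (auto simp: mod_if)
  then show ?thesis
    using assms unfolding closed_nbhd_def nbhd_def cycle_adj_def by auto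
qed

definition cycle_wrap :: "nat \<Rightarrow> nat \<Rightarrow> int" where
  "cycle_wrap k i = (if i = 0 then 1 else if i = k - 1 then - 1 else 0)"

lemma
  assumes "3 \<le> k" "i < k"
  shows card_closed_nbhd_cycle: "card (closed_nbhd {0..<k} (cycle_adj k) i) = 3"
    and sum_closed_nbhd_cycle:
      "int (\<Sum>(closed_nbhd {0..<k} (cycle_adj k) i)) = 3 * int i + int k * cycle_wrap k i"
proof -
  have distinct: "(i + k - 1) mod k \<noteq> i" "(i + 1) mod k \<noteq> i" "(i + k - 1) mod k \<noteq> (i + 1) mod k"
    using assms by (auto simp: mod_if)
  then show "card (closed_nbhd {0..<k} (cycle_adj k) i) = 3"
    using assms by (simp add: closed_nbhd_cycle)
  show "int (\<Sum>(closed_nbhd {0..<k} (cycle_adj k) i)) = 3 * int i + int k * cycle_wrap k i"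
    using assms distinct by (auto simp: closed_nbhd_cycle cycle_wrap_def mod_if)
qed

lemma card_nbhd_strong_cycles:
  assumes "3 \<le> m" "3 \<le> n" "x \<in> {0..<m} \<times> {0..<n}"
  shows "card (nbhd ({0..<m} \<times> {0..<n}) (strong_adj (cycle_adj m) (cycle_adj n)) x) = 8"
proof -
  obtain i j where ij: "x = (i, j)" "i < m" "j < n"
    using assms(3) by auto
  let ?A = "closed_nbhd {0..<m} (cycle_adj m) i" and ?B = "closed_nbhd {0..<n} (cycle_adj n) j"
  have "card (?A \<times> ?B) = 9"
    using assms ij by (simp add: card_cartesian_product card_closed_nbhd_cycle)
  moreover have "(i, j) \<in> ?A \<times> ?B"
    by (simp add: closed_nbhd_def)
  ultimately show ?thesis
    using ij by (simp add: nbhd_strong_adj card_Diff_singleton)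
qed

definition grid_label :: "nat \<Rightarrow> nat \<times> nat \<Rightarrow> nat" where
  "grid_label n = (\<lambda>(i, j). n * i + j)"

lemma bij_betw_grid_label:
  assumes "0 < n"
  shows "bij_betw (grid_label n) ({0..<m} \<times> {0..<n}) {0..<m * n}"
proof (rule bij_betw_byWitness[where f' = "\<lambda>k. (k div n, k mod n)"])
  have "n * i + j < m * n" if "i < m" "j < n" for i j
  proof -
    have "n * i + j < n * (i + 1)" using that by simp
    also have "\<dots> \<le> n * m" using that by (intro mult_le_mono2) simp
    finally show ?thesis by (simp add: mult.commute)
  qed
  then show "grid_label n ` ({0..<m} \<times> {0..<n}) \<subseteq> {0..<m * n}"
    unfolding grid_label_def by auto
  show "(\<lambda>k. (k div n, k mod n)) ` {0..<m * n} \<subseteq> {0..<m} \<times> {0..<n}"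
    using assms by (auto simp: less_mult_imp_div_less)
qed (use assms in \<open>auto simp: grid_label_def\<close>)

lemma sum_grid_label_Times:
  "sum (grid_label n) (A \<times> B) = card B * n * \<Sum>A + card A * \<Sum>B"
  unfolding grid_label_def sum.cartesian_product[symmetric]
  by (simp add: sum.distrib sum_distrib_left ac_simps)

lemma grid_label_weight_strong_cycles:
  assumes "3 \<le> m" "3 \<le> n" "i < m" "j < n"
  shows "int (\<Sum>y\<in>nbhd ({0..<m} \<times> {0..<n}) (strong_adj (cycle_adj m) (cycle_adj n)) (i, j).
                grid_label n y)
       = 8 * int (grid_label n (i, j)) + 3 * int n * (int m * cycle_wrap m i + cycle_wrap n j)"
    (is "int ?w = _")
proof -
  let ?A = "closed_nbhd {0..<m} (cycle_adj m) i" and ?B = "closed_nbhd {0..<n} (cycle_adj n) j"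
  have "finite (?A \<times> ?B)"
    using assms by (simp add: closed_nbhd_cycle)
  moreover have "(i, j) \<in> ?A \<times> ?B"
    by (simp add: closed_nbhd_def)
  ultimately have "sum (grid_label n) (?A \<times> ?B)
      = grid_label n (i, j) + sum (grid_label n) (?A \<times> ?B - {(i, j)})"
    by (rule sum.remove)
  then have "?w + grid_label n (i, j) = 3 * n * \<Sum>?A + 3 * \<Sum>?B"
    using assms by (simp add: nbhd_strong_adj sum_grid_label_Times card_closed_nbhd_cycle)
  then have "int ?w + int (grid_label n (i, j)) = 3 * int n * int (\<Sum>?A) + 3 * int (\<Sum>?B)"
    by (metis of_nat_add of_nat_mult of_nat_numeral)
  then show ?thesis
    unfolding sum_closed_nbhd_cycle[OF assms(1,3)] sum_closed_nbhd_cycle[OF assms(2,4)]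
    by (simp add: grid_label_def algebra_simps)
qed

lemma eq_if_dvd_coprime_mult_diff:
  fixes a b k :: nat and c :: int
  assumes "coprime c (int k)" "int k dvd c * (int a - int b)" "a < k" "b < k"
  shows "a = b"
proof -
  have "[int a = int b] (mod int k)"
    using assms(1,2) by (simp add: cong_iff_dvd_diff coprime_dvd_mult_right_iff coprime_commute)
  then show ?thesis
    using assms(3,4) by (simp add: cong_int_iff cong_less_modulus_unique_nat)
qed

lemma odd_imp_coprime_8: "odd k \<Longrightarrow> coprime (8 :: int) (int k)"
  using coprime_power_left_iff[of "2 :: int" 3 "int k"] by simp

lemma ZN_distance_antimagic_labelling_grid_label:
  assumes "3 \<le> m" "3 \<le> n" "odd m" "odd n"
  shows "ZN_distance_antimagic_labelling ({0..<m} \<times> {0..<n})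
           (strong_adj (cycle_adj m) (cycle_adj n)) (grid_label n)"
proof -
  let ?V = "{0..<m} \<times> {0..<n}" and ?E = "strong_adj (cycle_adj m) (cycle_adj n)"
  let ?w = "\<lambda>x. \<Sum>y\<in>nbhd ?V ?E x. grid_label n y"
  have "inj_on (\<lambda>x. ?w x mod (m * n)) ?V"
  proof (rule inj_onI)
    fix x x' assume "x \<in> ?V" "x' \<in> ?V" and "?w x mod (m * n) = ?w x' mod (m * n)"
    moreover obtain i j where ij: "x = (i, j)" "i < m" "j < n"
      using \<open>x \<in> ?V\<close> by auto
    moreover obtain i' j' where ij': "x' = (i', j')" "i' < m" "j' < n"
      using \<open>x' \<in> ?V\<close> by auto
    ultimately have "int (m * n) dvd int (?w (i, j)) - int (?w (i', j'))"
      by (simp only: cong_iff_dvd_diff flip: cong_int_iff cong_def)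
    then have diff: "int m * int n dvd 8 * (int j - int j')
        + int n * (8 * (int i - int i') + 3 * (int m * (cycle_wrap m i - cycle_wrap m i')
                                               + (cycle_wrap n j - cycle_wrap n j')))"
      unfolding grid_label_weight_strong_cycles[OF assms(1,2) ij(2,3)]
        grid_label_weight_strong_cycles[OF assms(1,2) ij'(2,3)]
      by (simp add: grid_label_def algebra_simps)
    then have "int n dvd 8 * (int j - int j')"
      using dvd_mult_right[OF diff] by (simp add: dvd_add_left_iff)
    then have "j = j'"
      using ij(3) ij'(3) assms(4) by (blast intro: eq_if_dvd_coprime_mult_diff odd_imp_coprime_8)
    with diff have "int n * int m dvd
        int n * (8 * (int i - int i') + int m * (3 * (cycle_wrap m i - cycle_wrap m i')))"
      by (simp add: algebra_simps)
    then have "int m dvd 8 * (int i - int i')"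
      using assms(2) by (simp add: dvd_add_left_iff)
    then have "i = i'"
      using ij(2) ij'(2) assms(3) by (blast intro: eq_if_dvd_coprime_mult_diff odd_imp_coprime_8)
    with \<open>j = j'\<close> ij ij' show "x = x'"
      by simp
  qed
  moreover have "bij_betw (grid_label n) ?V {0..<m * n}"
    using assms by (intro bij_betw_grid_label) simp
  ultimately show ?thesis
    unfolding ZN_distance_antimagic_labelling_def by (simp add: card_cartesian_product)
qed

theorem mainTheorem17:
  fixes m n :: nat
  assumes "m \<ge> 3" and "n \<ge> 3"
  shows "ZN_distance_antimagic ({0..<m} \<times> {0..<n}) (strong_adj (cycle_adj m) (cycle_adj n))
         \<longleftrightarrow> odd m \<and> odd n"
proof
  assume "ZN_distance_antimagic ({0..<m} \<times> {0..<n}) (strong_adj (cycle_adj m) (cycle_adj n))"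
  then have "odd (card ({0..<m} \<times> {0..<n}))"
    by (rule ZN_distance_antimagic_even_regular_imp_odd_card[OF _ _ _
          strong_adj_commute card_nbhd_strong_cycles[OF assms]])
      (use assms cycle_adj_commute in auto)
  then show "odd m \<and> odd n"
    by (simp add: card_cartesian_product)
next
  assume "odd m \<and> odd n"
  then show "ZN_distance_antimagic ({0..<m} \<times> {0..<n}) (strong_adj (cycle_adj m) (cycle_adj n))"
    using assms unfolding ZN_distance_antimagic_def
    by (blast intro: ZN_distance_antimagic_labelling_grid_label)
qed

end
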